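(* In the homogeneous UAV Persistent Service model (all displacement times equal to $g>0$, $2g<f$, $c\ge0$), every schedule that keeps each of the $N$ locations covered at every time $t\ge 0$ uses at least $$M=N+\left\lceil\frac{c+2g}{f-2g}\,N\right\rceil$$ UAVs. Consequently (together with the feasibility of HoRR with this many UAVs) this $M$ is exactly the minimum fleet size for persistent coverage.
   Context: UAV Persistent Service model: there is a single recharging station (RS) and a finite set $\mathcal N$ of $N$ aerial locations, served by identical UAVs. A UAV with a full battery can fly for at most $f>0$ time units; replacing/recharging its battery at the RS takes $c\ge0$ time units. Flying between the RS and location $i$ takes $g_i>0$ time units (here $g_i=g$ for all $i$), with $2g_i<f$. A UAV's activity consists of sorties: it leaves the RS fully charged, flies to one location, stays there (covering it), and flies back to the RS, the total airborne time of the sortie being at most $f$; back at the RS it spends $c$ time units recharging (possibly followed by idle time) before its next sortie. At time $0$ each UAV is fully charged, either at the RS or at a location. A location is covered at time $t$ if some UAV is present there at time $t$; a schedule is feasible if all locations are covered at all times $t\ge0$. HoRR schedule: with $x=\frac{f-2g}{N}$, initially one fully charged UAV at each location, the others fully charged at the RS; for $k=1,2,\dots$ a backup leaves the RS at time $kx-g$ and at time $kx$ replaces the serving UAV with least remaining energy, which returns to the RS, recharges and becomes a backup. *)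

theory Defs
  imports Complex_Main
begin

text \<open>Locations are 0,...,N-1; the recharging station (RS) is implicit.
  A sortie is a triple (d, i, l): the UAV leaves the RS (fully charged) at time d,
  flies to location i, arrives at d + g, stays there (covering it) until time l,
  leaves at l and is back at the RS at l + g.\<close>

type_synonym sortie = "real \<times> nat \<times> real"

definition sortie_dep :: "sortie \<Rightarrow> real" where
  "sortie_dep s = fst s"

definition sortie_loc :: "sortie \<Rightarrow> nat" where
  "sortie_loc s = fst (snd s)"

definition sortie_leave :: "sortie \<Rightarrow> real" where
  "sortie_leave s = snd (snd s)"

definition valid_sortie :: "nat \<Rightarrow> real \<Rightarrow> real \<Rightarrow> sortie \<Rightarrow> bool" where
  "valid_sortie N f g s \<longleftrightarrow>
     0 \<le> sortie_dep s \<and> sortie_loc s < N \<and>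
     sortie_dep s + g \<le> sortie_leave s \<and>
     (sortie_leave s + g) - sortie_dep s \<le> f"

text \<open>The activity of one UAV.  ini = None: fully charged at the RS at time 0.
  ini = Some i: fully charged at location i at time 0; it stays there until time l0,
  then flies back (arriving at l0 + g, airborne time l0 + g \<le> f) and recharges.  After each return to the RS the UAV spends c
  time units recharging before its next sortie may start; hence distinct sorties
  (and the initial stay) are separated accordingly.\<close>
definition uav_plan :: "nat \<Rightarrow> real \<Rightarrow> real \<Rightarrow> real \<Rightarrow> nat option \<Rightarrow> real \<Rightarrow> sortie set \<Rightarrow> bool" where
  "uav_plan N f c g ini l0 S \<longleftrightarrow>
     (\<forall>s\<in>S. valid_sortie N f g s) \<and>
     (\<forall>s1\<in>S. \<forall>s2\<in>S. s1 \<noteq> s2 \<longrightarrow>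
        sortie_leave s1 + g + c \<le> sortie_dep s2 \<or> sortie_leave s2 + g + c \<le> sortie_dep s1) \<and>
     (case ini of
        None \<Rightarrow> True
      | Some i \<Rightarrow> i < N \<and> 0 \<le> l0 \<and> l0 + g \<le> f \<and> (\<forall>s\<in>S. l0 + g + c \<le> sortie_dep s))"

definition present :: "real \<Rightarrow> nat option \<Rightarrow> real \<Rightarrow> sortie set \<Rightarrow> nat \<Rightarrow> real \<Rightarrow> bool" where
  "present g ini l0 S i t \<longleftrightarrow>
     (ini = Some i \<and> 0 \<le> t \<and> t \<le> l0) \<or>
     (\<exists>s\<in>S. sortie_loc s = i \<and> sortie_dep s + g \<le> t \<and> t \<le> sortie_leave s)"

definition feasible_schedule ::
  "nat \<Rightarrow> real \<Rightarrow> real \<Rightarrow> real \<Rightarrow> nat \<Rightarrow> (nat \<Rightarrow> nat option) \<Rightarrow> (nat \<Rightarrow> real) \<Rightarrow> (nat \<Rightarrow> sortie set) \<Rightarrow> bool"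
  where
  "feasible_schedule N f c g K ini l0 S \<longleftrightarrow>
     (\<forall>u<K. uav_plan N f c g (ini u) (l0 u) (S u)) \<and>
     (\<forall>i<N. \<forall>t\<ge>0. \<exists>u<K. present g (ini u) (l0 u) (S u) i t)"

end

theory Submission
  imports Defs "HOL-Analysis.Analysis"
begin

text \<open>Every sortie flies for 2g and is followed by c time units of recharging, so in the
  long run a UAV is present at a location for at most the fraction (f - 2g)/(f + c) of
  the time, up to a bounded initial stay.  Covering N locations during [0, T] needs N T
  units of presence, hence N T \<le> K ((f - 2g)/(f + c) T + const) for all T, that is
  N (f + c) \<le> K (f - 2g), which is the bound on K.  Conversely, in HoRR with this many
  UAVs each UAV serves for N relief periods x = (f - 2g)/N and is then idle for
  K - N periods, and (K - N) x \<ge> 2g + c is exactly enough to return, recharge and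
  fly out again.\<close>

definition sortie_stay :: "real \<Rightarrow> sortie \<Rightarrow> real" where
  "sortie_stay g s = sortie_leave s - sortie_dep s - g"

definition initial_stay :: "nat option \<Rightarrow> real \<Rightarrow> nat \<Rightarrow> real" where
  "initial_stay ini l0 i = (if ini = Some i then l0 else 0)"

definition fleet_bound :: "nat \<Rightarrow> real \<Rightarrow> real \<Rightarrow> real \<Rightarrow> nat" where
  "fleet_bound N f c g = N + nat \<lceil>(c + 2 * g) / (f - 2 * g) * real N\<rceil>"

lemma fleet_bound_le_iff:
  assumes "2 * g < f" and "0 \<le> c + 2 * g"
  shows "fleet_bound N f c g \<le> K \<longleftrightarrow> real N * (f + c) \<le> real K * (f - 2 * g)"
proof -
  let ?q = "(c + 2 * g) / (f - 2 * g) * real N"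
  have fg: "0 < f - 2 * g" using assms(1) by simp
  have "real N * (f + c) \<le> real K * (f - 2 * g) \<longleftrightarrow> ?q \<le> real K - real N"
    using fg by (simp add: field_simps)
  moreover have "fleet_bound N f c g \<le> K \<longleftrightarrow> ?q \<le> real K - real N"
  proof
    assume "fleet_bound N f c g \<le> K"
    then have "\<lceil>?q\<rceil> \<le> int K - int N" unfolding fleet_bound_def by linarith
    then show "?q \<le> real K - real N" by (simp add: ceiling_le_iff)
  next
    assume le: "?q \<le> real K - real N"
    have "0 \<le> ?q" using assms fg by simp
    then have "N \<le> K" using le by linarith
    moreover have "\<lceil>?q\<rceil> \<le> int K - int N" using le by (simp add: ceiling_le_iff)
    ultimately show "fleet_bound N f c g \<le> K" unfolding fleet_bound_def by linarith
  qed
  ultimately show ?thesis by simp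
qed

lemma le_of_affine_bound:
  fixes a b C :: real
  assumes "\<And>T. 0 \<le> T \<Longrightarrow> a * T \<le> b * T + C"
  shows "a \<le> b"
proof (rule ccontr)
  assume "\<not> a \<le> b"
  then have pos: "0 < a - b" by simp
  define T where "T = (\<bar>C\<bar> + 1) / (a - b)"
  have "(a - b) * T = \<bar>C\<bar> + 1" using pos by (simp add: T_def)
  moreover have "0 \<le> T" using pos by (simp add: T_def)
  then have "a * T \<le> b * T + C" by (rule assms)
  ultimately show False by (simp add: algebra_simps)
qed

lemma uav_plan_sortie_valid:
  "uav_plan N f c g ini l0 S \<Longrightarrow> s \<in> S \<Longrightarrow> valid_sortie N f g s"
  unfolding uav_plan_def by blast

lemma uav_plan_sorties_separated:
  "uav_plan N f c g ini l0 S \<Longrightarrow> s1 \<in> S \<Longrightarrow> s2 \<in> S \<Longrightarrow> s1 \<noteq> s2 \<Longrightarrow>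
     sortie_leave s1 + g + c \<le> sortie_dep s2 \<or> sortie_leave s2 + g + c \<le> sortie_dep s1"
  unfolding uav_plan_def by blast

lemma uav_plan_departures_separated:
  assumes P: "uav_plan N f c g ini l0 S" and "s1 \<in> S" "s2 \<in> S" "s1 \<noteq> s2"
  shows "2 * g + c \<le> \<bar>sortie_dep s1 - sortie_dep s2\<bar>"
  using uav_plan_sorties_separated[OF assms] uav_plan_sortie_valid[OF P assms(2)]
    uav_plan_sortie_valid[OF P assms(3)]
  by (auto simp: valid_sortie_def)

lemma uav_plan_finite_sorties_before:
  assumes P: "uav_plan N f c g ini l0 S" and "0 < g" and "0 \<le> c"
  shows "finite {s\<in>S. sortie_dep s \<le> T}"
proof -
  let ?F = "{s\<in>S. sortie_dep s \<le> T}"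
  have sep: "s1 \<in> ?F \<Longrightarrow> s2 \<in> ?F \<Longrightarrow> s1 \<noteq> s2 \<Longrightarrow> 2 * g + c \<le> \<bar>sortie_dep s1 - sortie_dep s2\<bar>"
    for s1 s2 using uav_plan_departures_separated[OF P] by blast
  have "inj_on sortie_dep ?F"
    using sep assms(2,3) by (fastforce intro: inj_onI)
  moreover have "uniform_discrete (sortie_dep ` ?F)"
    unfolding uniform_discrete_def dist_real_def
    using sep assms(2,3) by (intro exI[of _ "2 * g + c"]) force
  moreover have "sortie_dep ` ?F \<subseteq> {0..T}"
    using uav_plan_sortie_valid[OF P] by (auto simp: valid_sortie_def)
  then have "bounded (sortie_dep ` ?F)"
    using bounded_closed_interval bounded_subset by blast
  ultimately show ?thesis
    using uniform_discrete_finite_iff finite_imageD by blast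
qed

lemma valid_sortie_stay_le_duty_share:
  assumes "valid_sortie N f g s" and "0 < g" and "0 \<le> c"
  shows "sortie_stay g s \<le> (f - 2 * g) / (f + c) * (sortie_leave s + g + c - sortie_dep s)"
proof -
  define a where "a = sortie_stay g s"
  have a: "0 \<le> a" "a \<le> f - 2 * g"
    using assms(1) by (auto simp: valid_sortie_def a_def sortie_stay_def)
  have fc: "0 < f + c" using a assms(2,3) by linarith
  have "a * (2 * g + c) \<le> (f - 2 * g) * (2 * g + c)"
    using a assms(2,3) by (intro mult_right_mono) auto
  then have "a * (f + c) \<le> (f - 2 * g) * (a + 2 * g + c)"
    by (simp add: algebra_simps)
  then have "a \<le> (f - 2 * g) / (f + c) * (a + 2 * g + c)"
    using fc by (simp add: field_simps)
  also have "a + 2 * g + c = sortie_leave s + g + c - sortie_dep s"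
    by (simp add: a_def sortie_stay_def)
  finally show ?thesis unfolding a_def .
qed

text \<open>The busy periods [dep, leave + g + c) of the sorties departing by time T are
  pairwise disjoint and lie in [0, T + f + c].\<close>
lemma uav_plan_stays_le:
  assumes P: "uav_plan N f c g ini l0 S" and "0 < g" and "2 * g < f" and "0 \<le> c" and "0 \<le> T"
  shows "(\<Sum>s\<in>{s\<in>S. sortie_dep s \<le> T}. sortie_stay g s) \<le> (f - 2 * g) / (f + c) * (T + f + c)"
proof -
  let ?F = "{s\<in>S. sortie_dep s \<le> T}"
  let ?r = "(f - 2 * g) / (f + c)"
  define J where "J s = {sortie_dep s ..< sortie_leave s + g + c}" for s
  have fin: "finite ?F" using uav_plan_finite_sorties_before[OF P assms(2,4)] .
  have r: "0 \<le> ?r" using assms(2-4) by simp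
  have J_fm: "J s \<in> fmeasurable lborel" for s
    by (rule fmeasurableI2[of "{sortie_dep s .. sortie_leave s + g + c}"])
       (auto simp: J_def intro: fmeasurable_compact)
  have J_measure: "measure lborel (J s) = sortie_leave s + g + c - sortie_dep s" if "s \<in> S" for s
    using uav_plan_sortie_valid[OF P that] assms(2,4) by (simp add: J_def valid_sortie_def)
  have disj: "pairwise (\<lambda>s1 s2. disjnt (J s1) (J s2)) ?F"
    unfolding pairwise_def disjnt_def J_def using uav_plan_sorties_separated[OF P] by fastforce
  have sub: "(\<Union>s\<in>?F. J s) \<subseteq> {0..T + f + c}"
    using uav_plan_sortie_valid[OF P] by (fastforce simp: J_def valid_sortie_def)
  have "(\<Sum>s\<in>?F. sortie_stay g s) \<le> (\<Sum>s\<in>?F. ?r * measure lborel (J s))"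
    using valid_sortie_stay_le_duty_share[OF uav_plan_sortie_valid[OF P] assms(2,4)] J_measure
    by (intro sum_mono) simp
  also have "\<dots> = ?r * measure lborel (\<Union>s\<in>?F. J s)"
    by (simp add: sum_distrib_left measure_UNION'[OF fin J_fm disj])
  also have "\<dots> \<le> ?r * measure lborel {0..T + f + c}"
    using fin r by (intro mult_left_mono measure_mono_fmeasurable sub)
      (auto intro!: fmeasurable_compact sets.finite_UN simp: J_def)
  also have "\<dots> = ?r * (T + f + c)"
    using assms(2-5) by simp
  finally show ?thesis .
qed

definition service_intervals :: "real \<Rightarrow> nat option \<Rightarrow> real \<Rightarrow> sortie set \<Rightarrow> nat \<Rightarrow> real \<Rightarrow> real set"
  where "service_intervals g ini l0 S i T =
    (if ini = Some i then {0..l0} else {}) \<union>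
    (\<Union>s\<in>{s\<in>S. sortie_dep s \<le> T \<and> sortie_loc s = i}. {sortie_dep s + g..sortie_leave s})"

lemma present_in_service_intervals:
  "0 < g \<Longrightarrow> 0 \<le> t \<Longrightarrow> t \<le> T \<Longrightarrow> present g ini l0 S i t \<Longrightarrow> t \<in> service_intervals g ini l0 S i T"
  by (force simp: service_intervals_def present_def)

lemma uav_plan_service_intervals:
  assumes P: "uav_plan N f c g ini l0 S" and "0 < g" and "0 \<le> c"
  shows "compact (service_intervals g ini l0 S i T)"
    and "measure lborel (service_intervals g ini l0 S i T) \<le> initial_stay ini l0 i +
           (\<Sum>s\<in>{s\<in>S. sortie_dep s \<le> T \<and> sortie_loc s = i}. sortie_stay g s)"
proof -
  let ?F = "{s\<in>S. sortie_dep s \<le> T \<and> sortie_loc s = i}"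
  define A where "A = (if ini = Some i then {0..l0} else {})"
  have B: "service_intervals g ini l0 S i T = A \<union> (\<Union>s\<in>?F. {sortie_dep s + g..sortie_leave s})"
    by (simp add: service_intervals_def A_def)
  have fin: "finite ?F"
    by (rule finite_subset[OF _ uav_plan_finite_sorties_before[OF P assms(2,3)]]) auto
  show "compact (service_intervals g ini l0 S i T)"
    unfolding B A_def using fin by (intro compact_Un compact_UN) auto
  have "measure lborel (service_intervals g ini l0 S i T)
      \<le> measure lborel A + measure lborel (\<Union>s\<in>?F. {sortie_dep s + g..sortie_leave s})"
    unfolding B using fin by (intro measure_Un_le) (auto simp: A_def)
  also have "measure lborel A = initial_stay ini l0 i"
    using P by (auto simp: A_def initial_stay_def uav_plan_def)
  also have "measure lborel (\<Union>s\<in>?F. {sortie_dep s + g..sortie_leave s})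
      \<le> (\<Sum>s\<in>?F. measure lborel {sortie_dep s + g..sortie_leave s})"
    using fin by (intro measure_UNION_le) auto
  also have "\<dots> = (\<Sum>s\<in>?F. sortie_stay g s)"
    using uav_plan_sortie_valid[OF P] by (intro sum.cong) (auto simp: valid_sortie_def sortie_stay_def)
  finally show "measure lborel (service_intervals g ini l0 S i T) \<le> initial_stay ini l0 i +
      (\<Sum>s\<in>?F. sortie_stay g s)" by simp
qed

lemma feasible_schedule_location_time_le:
  assumes F: "feasible_schedule N f c g K ini l0 S" and "0 < g" and "0 \<le> c"
    and "i < N" and "0 \<le> T"
  shows "T \<le> (\<Sum>u<K. initial_stay (ini u) (l0 u) i +
            (\<Sum>s\<in>{s\<in>S u. sortie_dep s \<le> T \<and> sortie_loc s = i}. sortie_stay g s))"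
proof -
  define B where "B u = service_intervals g (ini u) (l0 u) (S u) i T" for u
  have P: "uav_plan N f c g (ini u) (l0 u) (S u)" if "u < K" for u
    using F that by (simp add: feasible_schedule_def)
  have compact: "compact (B u)" if "u < K" for u
    using uav_plan_service_intervals(1)[OF P[OF that] assms(2,3)] by (simp add: B_def)
  have cover: "{0..T} \<subseteq> (\<Union>u<K. B u)"
  proof
    fix t assume t: "t \<in> {0..T}"
    then have "\<exists>u<K. present g (ini u) (l0 u) (S u) i t"
      using F assms(4) by (simp add: feasible_schedule_def)
    then obtain u where "u < K" "present g (ini u) (l0 u) (S u) i t" by blast
    then have "t \<in> B u" using present_in_service_intervals[OF assms(2)] t by (simp add: B_def)
    then show "t \<in> (\<Union>u<K. B u)" using \<open>u < K\<close> by blast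
  qed
  have "T = measure lborel {0..T}" using assms(5) by simp
  also have "\<dots> \<le> measure lborel (\<Union>u<K. B u)"
    using compact by (intro measure_mono_fmeasurable cover) (auto intro!: fmeasurable_compact compact_UN)
  also have "\<dots> \<le> (\<Sum>u<K. measure lborel (B u))"
    using compact by (intro measure_UNION_le) (auto intro: borel_compact)
  also have "\<dots> \<le> (\<Sum>u<K. initial_stay (ini u) (l0 u) i +
      (\<Sum>s\<in>{s\<in>S u. sortie_dep s \<le> T \<and> sortie_loc s = i}. sortie_stay g s))"
    using uav_plan_service_intervals(2)[OF P assms(2,3)] by (intro sum_mono) (simp add: B_def)
  finally show ?thesis .
qed

lemma uav_plan_service_le:
  assumes P: "uav_plan N f c g ini l0 S" and "0 < g" and "2 * g < f" and "0 \<le> c" and "0 \<le> T"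
  shows "(\<Sum>i<N. initial_stay ini l0 i +
            (\<Sum>s\<in>{s\<in>S. sortie_dep s \<le> T \<and> sortie_loc s = i}. sortie_stay g s))
         \<le> f + (f - 2 * g) / (f + c) * (T + f + c)"
proof -
  let ?F = "{s\<in>S. sortie_dep s \<le> T}"
  have "(\<Sum>i<N. initial_stay ini l0 i) \<le> f"
  proof (cases ini)
    case (Some j)
    have "(\<Sum>i<N. initial_stay ini l0 i) = (if j < N then l0 else 0)"
      using Some by (simp add: initial_stay_def)
    then show ?thesis using P Some assms(2,3) by (auto simp: uav_plan_def)
  qed (use assms(2,3) in \<open>simp add: initial_stay_def\<close>)
  moreover have "(\<Sum>i<N. \<Sum>s\<in>{s\<in>S. sortie_dep s \<le> T \<and> sortie_loc s = i}. sortie_stay g s)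
      = (\<Sum>s\<in>?F. sortie_stay g s)"
  proof -
    have "{s\<in>S. sortie_dep s \<le> T \<and> sortie_loc s = i} = {s\<in>?F. sortie_loc s = i}" for i
      by auto
    moreover have "(\<Sum>i<N. \<Sum>s\<in>{s\<in>?F. sortie_loc s = i}. sortie_stay g s) = (\<Sum>s\<in>?F. sortie_stay g s)"
      using uav_plan_sortie_valid[OF P] uav_plan_finite_sorties_before[OF P assms(2,4)]
      by (intro sum.group) (auto simp: valid_sortie_def)
    ultimately show ?thesis by simp
  qed
  moreover have "(\<Sum>s\<in>?F. sortie_stay g s) \<le> (f - 2 * g) / (f + c) * (T + f + c)"
    using uav_plan_stays_le[OF assms] .
  ultimately show ?thesis by (simp only: sum.distrib)
qed

lemma feasible_schedule_coverage_le:
  assumes F: "feasible_schedule N f c g K ini l0 S" and "0 < g" and "2 * g < f" and "0 \<le> c"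
    and "0 \<le> T"
  shows "real N * T \<le> real K * (f + (f - 2 * g) / (f + c) * (T + f + c))"
proof -
  have "real N * T = (\<Sum>i<N. T)" by simp
  also have "\<dots> \<le> (\<Sum>i<N. \<Sum>u<K. initial_stay (ini u) (l0 u) i +
      (\<Sum>s\<in>{s\<in>S u. sortie_dep s \<le> T \<and> sortie_loc s = i}. sortie_stay g s))"
    using feasible_schedule_location_time_le[OF F assms(2,4) _ assms(5)] by (intro sum_mono) simp
  also have "\<dots> = (\<Sum>u<K. \<Sum>i<N. initial_stay (ini u) (l0 u) i +
      (\<Sum>s\<in>{s\<in>S u. sortie_dep s \<le> T \<and> sortie_loc s = i}. sortie_stay g s))"
    by (rule sum.swap)
  also have "\<dots> \<le> (\<Sum>u<K. f + (f - 2 * g) / (f + c) * (T + f + c))"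
    using F uav_plan_service_le[OF _ assms(2-5)] by (intro sum_mono) (simp add: feasible_schedule_def)
  finally show ?thesis by simp
qed

lemma feasible_schedule_fleet_bound_le:
  assumes F: "feasible_schedule N f c g K ini l0 S" and "0 < g" and "2 * g < f" and "0 \<le> c"
  shows "fleet_bound N f c g \<le> K"
proof -
  define r where "r = (f - 2 * g) / (f + c)"
  have "real N * T \<le> (real K * r) * T + real K * (f + r * (f + c))" if "0 \<le> T" for T
    using feasible_schedule_coverage_le[OF assms that, folded r_def] by (simp add: algebra_simps)
  then have "real N \<le> real K * r" by (rule le_of_affine_bound)
  moreover have "0 < f + c" using assms(2-4) by simp
  ultimately have "real N * (f + c) \<le> real K * (f - 2 * g)"
    by (simp add: r_def field_simps)
  then show ?thesis using fleet_bound_le_iff assms(2-4) by simp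
qed

lemma exists_mod_eq_window:
  fixes s :: real
  assumes "i < N" and "0 \<le> s"
  shows "\<exists>m. m mod N = i \<and> real m + 1 - real N \<le> s \<and> s \<le> real m + 1"
proof -
  have N: "0 < N" using assms(1) by simp
  define q where "q = nat \<lceil>(s - real i - 1) / real N\<rceil>"
  define m where "m = i + N * q"
  have "(s - real i - 1) / real N \<le> real q" unfolding q_def by linarith
  then have "s \<le> real m + 1" using N by (simp add: m_def field_simps)
  moreover have "real m + 1 - real N \<le> s"
  proof (cases "q = 0")
    case True
    then show ?thesis using assms by (simp add: m_def)
  next
    case False
    then have "real q - 1 < (s - real i - 1) / real N" unfolding q_def by linarith
    then show ?thesis using N by (simp add: m_def field_simps)
  qed
  moreover have "m mod N = i" using assms(1) by (simp add: m_def)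
  ultimately show ?thesis by blast
qed

text \<open>HoRR with x = period and M = fleet: slot m is the service of location m mod N from
  the relief at time (m + 1 - N) x until the next relief of that location at time
  (m + 1) x, and it is flown by UAV m mod M.  A slot starting before time g cannot be reached from the RS,
  so its UAV is placed at the location at time 0 (this covers the N initial UAVs and,
  when x < g, also the first backups).\<close>
locale horr =
  fixes N :: nat and f c g :: real
  assumes N_pos: "0 < N" and g_pos: "0 < g" and f_gt: "2 * g < f" and c_nonneg: "0 \<le> c"
begin

definition period :: real where
  "period = (f - 2 * g) / real N"

abbreviation fleet :: nat where
  "fleet \<equiv> fleet_bound N f c g"

definition slot_start :: "nat \<Rightarrow> real" where
  "slot_start m = (real m + 1 - real N) * period"

definition slot_end :: "nat \<Rightarrow> real" where
  "slot_end m = (real m + 1) * period"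

definition slot_sortie :: "nat \<Rightarrow> sortie" where
  "slot_sortie m = (slot_start m - g, m mod N, slot_end m)"

definition initial_loc :: "nat \<Rightarrow> nat option" where
  "initial_loc u = (if slot_start u < g then Some (u mod N) else None)"

definition sorties :: "nat \<Rightarrow> sortie set" where
  "sorties u = slot_sortie ` {m. m mod fleet = u \<and> g \<le> slot_start m}"

lemma period_pos: "0 < period"
  using N_pos f_gt by (simp add: period_def)

lemma slot_end_eq: "slot_end m = slot_start m + (f - 2 * g)"
  using N_pos by (simp add: slot_end_def slot_start_def period_def field_simps)

lemma fleet_ge: "N \<le> fleet"
  by (simp add: fleet_bound_def)

lemma idle_periods_ge: "2 * g + c \<le> (real fleet - real N) * period"
proof -
  have "real N * (f + c) \<le> real fleet * (f - 2 * g)"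
    using fleet_bound_le_iff[of g f c N fleet] f_gt g_pos c_nonneg by simp
  then show ?thesis using N_pos by (simp add: period_def field_simps)
qed

lemma slot_start_less_imp_less: "slot_start m1 < slot_start m2 \<Longrightarrow> m1 < m2"
  using period_pos by (simp add: slot_start_def mult_less_cancel_right)

lemma slot_start_ge_g: "fleet \<le> m \<Longrightarrow> g \<le> slot_start m"
proof -
  assume "fleet \<le> m"
  then have "(real fleet - real N) * period \<le> (real m + 1 - real N) * period"
    using period_pos by (intro mult_right_mono) auto
  then show ?thesis using idle_periods_ge g_pos c_nonneg by (simp add: slot_start_def)
qed

lemma same_uav_slots_separated:
  assumes "m1 mod fleet = m2 mod fleet" and "m1 < m2"
  shows "slot_end m1 + g + c \<le> slot_start m2 - g"
proof -
  have "fleet dvd m2 - m1" using assms by (metis less_imp_le mod_eq_dvd_iff_nat)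
  then have "fleet \<le> m2 - m1" using assms(2) by (intro dvd_imp_le) auto
  then have "(real fleet - real N) * period \<le> (real m2 - real m1 - real N) * period"
    using period_pos assms(2) by (intro mult_right_mono) auto
  then show ?thesis using idle_periods_ge by (simp add: slot_start_def slot_end_def algebra_simps)
qed

lemma valid_slot_sortie: "g \<le> slot_start m \<Longrightarrow> valid_sortie N f g (slot_sortie m)"
  using N_pos slot_end_eq[of m] f_gt
  by (simp add: valid_sortie_def slot_sortie_def sortie_dep_def sortie_loc_def sortie_leave_def)

lemma uav_plan_horr:
  assumes "u < fleet"
  shows "uav_plan N f c g (initial_loc u) (slot_end u) (sorties u)"
  unfolding uav_plan_def
proof (intro conjI ballI impI)
  fix s assume "s \<in> sorties u"
  then show "valid_sortie N f g s" by (auto simp: sorties_def valid_slot_sortie)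
next
  fix s1 s2 assume s: "s1 \<in> sorties u" "s2 \<in> sorties u" "s1 \<noteq> s2"
  obtain m1 m2 where m: "s1 = slot_sortie m1" "s2 = slot_sortie m2"
    "m1 mod fleet = u" "m2 mod fleet = u"
    using s(1,2) by (auto simp: sorties_def)
  then have "m1 < m2 \<or> m2 < m1" using s(3) by (metis linorder_neqE_nat)
  then show "sortie_leave s1 + g + c \<le> sortie_dep s2 \<or> sortie_leave s2 + g + c \<le> sortie_dep s1"
    using same_uav_slots_separated m
    by (auto simp: slot_sortie_def sortie_dep_def sortie_leave_def)
next
  show "case initial_loc u of None \<Rightarrow> True
    | Some i \<Rightarrow> i < N \<and> 0 \<le> slot_end u \<and> slot_end u + g \<le> f \<and>
        (\<forall>s\<in>sorties u. slot_end u + g + c \<le> sortie_dep s)"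
  proof (cases "slot_start u < g")
    case True
    have "slot_end u + g + c \<le> sortie_dep s" if "s \<in> sorties u" for s
    proof -
      obtain m where m: "s = slot_sortie m" "m mod fleet = u" "g \<le> slot_start m"
        using \<open>s \<in> sorties u\<close> unfolding sorties_def by blast
      then have "u < m" using slot_start_less_imp_less[of u m] True by simp
      moreover have "u mod fleet = m mod fleet" using m(2) assms by simp
      ultimately show ?thesis using same_uav_slots_separated[of u m] m(1)
        by (simp add: slot_sortie_def sortie_dep_def)
    qed
    moreover have "0 \<le> slot_end u" using period_pos by (simp add: slot_end_def)
    moreover have "slot_end u + g \<le> f" using True slot_end_eq[of u] by simp
    ultimately show ?thesis using True N_pos by (simp add: initial_loc_def)
  qed (simp add: initial_loc_def)
qed

lemma horr_covers:
  assumes "i < N" and "0 \<le> t"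
  shows "\<exists>u<fleet. present g (initial_loc u) (slot_end u) (sorties u) i t"
proof -
  have "0 \<le> t / period" using assms(2) period_pos by simp
  then obtain m where m: "m mod N = i" "real m + 1 - real N \<le> t / period" "t / period \<le> real m + 1"
    using exists_mod_eq_window[OF assms(1)] by blast
  have "slot_start m \<le> t" "t \<le> slot_end m"
    using m period_pos by (simp_all add: slot_start_def slot_end_def field_simps)
  show ?thesis
  proof (cases "g \<le> slot_start m")
    case True
    then have "slot_sortie m \<in> sorties (m mod fleet)" by (auto simp: sorties_def)
    then have "present g (initial_loc (m mod fleet)) (slot_end (m mod fleet)) (sorties (m mod fleet)) i t"
      unfolding present_def using \<open>slot_start m \<le> t\<close> \<open>t \<le> slot_end m\<close> m(1)
      by (intro disjI2 bexI[of _ "slot_sortie m"])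
        (auto simp: slot_sortie_def sortie_dep_def sortie_loc_def sortie_leave_def)
    moreover have "0 < fleet" using N_pos fleet_ge by linarith
    ultimately show ?thesis by (intro exI[of _ "m mod fleet"]) auto
  next
    case False
    then have "m < fleet" using slot_start_ge_g by (meson not_le)
    moreover have "present g (initial_loc m) (slot_end m) (sorties m) i t"
      unfolding present_def using False m(1) assms(2) \<open>t \<le> slot_end m\<close>
      by (simp add: initial_loc_def)
    ultimately show ?thesis by blast
  qed
qed

lemma feasible_schedule_horr: "feasible_schedule N f c g fleet initial_loc slot_end sorties"
  unfolding feasible_schedule_def using uav_plan_horr horr_covers by blast

end

lemma exists_feasible_schedule_fleet_bound:
  assumes "0 < g" and "2 * g < f" and "0 \<le> c"
  shows "\<exists>ini l0 S. feasible_schedule N f c g (fleet_bound N f c g) ini l0 S"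
proof (cases "N = 0")
  case True
  then show ?thesis by (simp add: feasible_schedule_def fleet_bound_def)
next
  case False
  then interpret horr N f c g using assms by unfold_locales simp_all
  show ?thesis using feasible_schedule_horr by blast
qed

theorem theorem2:
  fixes N :: nat and f c g :: real
  assumes "0 < g" and "2 * g < f" and "0 \<le> c"
  shows "(\<forall>K ini l0 S. feasible_schedule N f c g K ini l0 S \<longrightarrow>
            N + nat \<lceil>(c + 2 * g) / (f - 2 * g) * real N\<rceil> \<le> K)
       \<and> (\<exists>ini l0 S. feasible_schedule N f c g
            (N + nat \<lceil>(c + 2 * g) / (f - 2 * g) * real N\<rceil>) ini l0 S)"
  using feasible_schedule_fleet_bound_le[OF _ assms] exists_feasible_schedule_fleet_bound[OF assms]
  unfolding fleet_bound_def by blast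

end
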